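(* Let $X$ be a real Banach space, $f\in\Gamma_0(X)$, $S_f\ne\emptyset$. Then $$\inf\{\varepsilon>0\mid \mathrm{Er}\{\mathrm{Ptb}^w(f,\varepsilon)\}=0\}\le\inf\{\varepsilon>0\mid \mathrm{Er}\{\mathrm{Ptb}^w_l(f,\varepsilon)\}=0\}\le|\partial f|_{\rm bd}$$ and $$|\partial f|_{\rm bd}\le\inf\{\varepsilon>0\mid \mathrm{Er}\{\mathrm{Ptb}(f,\varepsilon)\}=0\}\le\inf\{\varepsilon>0\mid \mathrm{Er}\{\mathrm{Ptb}_l(f,\varepsilon)\}=0\}.$$
   Context: $X^*$ is the dual, $\mathbb{B}^*$ its closed unit ball. $\Gamma_0(X)$: proper convex lsc extended-real-valued functions on $X$. For convex $f$, $\partial f(x):=\{x^*\in X^*\mid \langle x^*,u-x\rangle\le f(u)-f(x)\ \forall u\in X\}$. $d(x,S)=\inf_{u\in S}\|u-x\|$, $d(x,\emptyset)=+\infty$, $\inf\emptyset=+\infty$. $S_f:=\{x\mid f(x)\le0\}$, $S_f^=:=\{x\mid f(x)=0\}$. Global error bound modulus: $\mathrm{Er}\,f:=\inf_{f(x)>0}\frac{f(x)}{d(x,S_f)}$. $|\partial f|_{\rm bd}:=\inf_{f(x)=0} d(0,\mathrm{bd}\,\partial f(x))$ (boundary in norm topology of $X^*$). For $x\in S_f^=$, $\varepsilon,\delta\ge0$: $\tau(f,x,\varepsilon,\delta):=\inf_{u:\,f(u)\ge-\varepsilon\|u-x\|-\delta} d(0,\partial f(u))$ if $0\notin\mathrm{int}\,\partial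 f(x)$, and $:=d(0,\mathrm{bd}\,\partial f(x))$ if $0\in\mathrm{int}\,\partial f(x)$. For $\varepsilon\ge0$: $g$ is an $\varepsilon$-perturbation of $f$ ($g\in\mathrm{Ptb}(f,\varepsilon)$) if $S_g\ne\emptyset$, $g=f+p$ with $p:X\to\mathbb{R}$ convex, and there exist $x\in S_f^=$ and $\xi\ge0$ such that $\xi+|\partial f|_{\rm bd}-\tau(f,x,\xi,|p(x)|)\le\varepsilon$ and $|p(u)-p(x)|\le\xi\|u-x\|$ for all $u\in X$. $g$ is a weak $\varepsilon$-perturbation ($g\in\mathrm{Ptb}^w(f,\varepsilon)$) if $S_g\ne\emptyset$, $g=f+p$ with $p:X\to\mathbb{R}$ convex, and there is $x\in S_f^=$ with $|p(u)-p(x)|\le\varepsilon\|u-x\|$ for all $u\in X$. $\mathrm{Ptb}_l(f,\varepsilon):=\{g\mid g(u)-f(u)=\langle x^*,u-x\rangle\ \forall u,\ \text{for some } x\in S_f^=,\ \xi\ge0,\ x^*\in\xi\mathbb{B}^*\text{ with }\xi+|\partial f|_{\rm bd}-\tau(f,x,\xi,0)\le\varepsilon\}$; $\mathrm{Ptb}^w_l(f,\varepsilon):=\{g\mid g(u)-f(u)=\langle x^*,u-x\rangle\ \forall u,\ \text{for some } x\in S_f^=,\ x^*\in\varepsilon\mathbb{B}^*\}$. For each family $\mathcal{F}$ among these, $\mathrm{Er}\{\mathcal{F}\}:=\inf_{g\in\mathcal{F}}\mathrm{Er}\,g$. *)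

theory Defs
  imports "HOL-Analysis.Analysis"
begin

text \<open>The dual space X^* is modelled as the type of bounded (= continuous) linear
functionals ('a =>L real) with the operator norm (norm topology).\<close>

definition proper_fun :: "('a \<Rightarrow> ereal) \<Rightarrow> bool" where
  "proper_fun f \<longleftrightarrow> (\<forall>x. f x \<noteq> -\<infinity>) \<and> (\<exists>x. f x \<noteq> \<infinity>)"

definition convex_fun :: "('a::real_vector \<Rightarrow> ereal) \<Rightarrow> bool" where
  "convex_fun f \<longleftrightarrow> convex {(x, t::real). f x \<le> ereal t}"

definition lsc_fun :: "('a::topological_space \<Rightarrow> ereal) \<Rightarrow> bool" where
  "lsc_fun f \<longleftrightarrow> (\<forall>t. closed {x. f x \<le> t})"

definition Gamma0 :: "('a::real_normed_vector \<Rightarrow> ereal) set" where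
  "Gamma0 = {f. proper_fun f \<and> convex_fun f \<and> lsc_fun f}"

definition subdiff :: "('a::real_normed_vector \<Rightarrow> ereal) \<Rightarrow> 'a \<Rightarrow> ('a \<Rightarrow>\<^sub>L real) set" where
  "subdiff f x = {xs. \<bar>f x\<bar> \<noteq> \<infinity> \<and>
      (\<forall>u. ereal (blinfun_apply xs (u - x)) \<le> f u - f x)}"

definition edist :: "'a::metric_space \<Rightarrow> 'a set \<Rightarrow> ereal" where
  "edist x S = (if S = {} then \<infinity> else ereal (infdist x S))"

definition Sf :: "('a \<Rightarrow> ereal) \<Rightarrow> 'a set" where
  "Sf f = {x. f x \<le> 0}"

definition Sf_eq :: "('a \<Rightarrow> ereal) \<Rightarrow> 'a set" where
  "Sf_eq f = {x. f x = 0}"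

definition Er :: "('a::real_normed_vector \<Rightarrow> ereal) \<Rightarrow> ereal" where
  "Er f = (INF x\<in>{x. f x > 0}. f x / edist x (Sf f))"

definition subdiff_bd :: "('a::real_normed_vector \<Rightarrow> ereal) \<Rightarrow> ereal" where
  "subdiff_bd f = (INF x\<in>Sf_eq f. edist 0 (frontier (subdiff f x)))"

definition tau :: "('a::real_normed_vector \<Rightarrow> ereal) \<Rightarrow> 'a \<Rightarrow> real \<Rightarrow> real \<Rightarrow> ereal" where
  "tau f x \<epsilon> \<delta> =
     (if 0 \<notin> interior (subdiff f x)
      then (INF u\<in>{u. f u \<ge> ereal (- \<epsilon> * norm (u - x) - \<delta>)}. edist 0 (subdiff f u))
      else edist 0 (frontier (subdiff f x)))"

definition Ptb :: "('a::real_normed_vector \<Rightarrow> ereal) \<Rightarrow> real \<Rightarrow> ('a \<Rightarrow> ereal) set" where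
  "Ptb f \<epsilon> = {g. Sf g \<noteq> {} \<and>
     (\<exists>p::'a \<Rightarrow> real. convex_on UNIV p \<and> g = (\<lambda>u. f u + ereal (p u)) \<and>
        (\<exists>x \<xi>. x \<in> Sf_eq f \<and> \<xi> \<ge> 0 \<and>
           ereal \<xi> + subdiff_bd f - tau f x \<xi> \<bar>p x\<bar> \<le> ereal \<epsilon> \<and>
           (\<forall>u. \<bar>p u - p x\<bar> \<le> \<xi> * norm (u - x))))}"

definition Ptb_w :: "('a::real_normed_vector \<Rightarrow> ereal) \<Rightarrow> real \<Rightarrow> ('a \<Rightarrow> ereal) set" where
  "Ptb_w f \<epsilon> = {g. Sf g \<noteq> {} \<and>
     (\<exists>p::'a \<Rightarrow> real. convex_on UNIV p \<and> g = (\<lambda>u. f u + ereal (p u)) \<and>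
        (\<exists>x. x \<in> Sf_eq f \<and> (\<forall>u. \<bar>p u - p x\<bar> \<le> \<epsilon> * norm (u - x))))}"

definition Ptb_l :: "('a::real_normed_vector \<Rightarrow> ereal) \<Rightarrow> real \<Rightarrow> ('a \<Rightarrow> ereal) set" where
  "Ptb_l f \<epsilon> = {g. \<exists>x \<xi> (xs::'a \<Rightarrow>\<^sub>L real). x \<in> Sf_eq f \<and> \<xi> \<ge> 0 \<and> norm xs \<le> \<xi> \<and>
        ereal \<xi> + subdiff_bd f - tau f x \<xi> 0 \<le> ereal \<epsilon> \<and>
        g = (\<lambda>u. f u + ereal (blinfun_apply xs (u - x)))}"

definition Ptb_wl :: "('a::real_normed_vector \<Rightarrow> ereal) \<Rightarrow> real \<Rightarrow> ('a \<Rightarrow> ereal) set" where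
  "Ptb_wl f \<epsilon> = {g. \<exists>x (xs::'a \<Rightarrow>\<^sub>L real). x \<in> Sf_eq f \<and> norm xs \<le> \<epsilon> \<and>
        g = (\<lambda>u. f u + ereal (blinfun_apply xs (u - x)))}"

definition Er_fam :: "('a::real_normed_vector \<Rightarrow> ereal) set \<Rightarrow> ereal" where
  "Er_fam F = (INF g\<in>F. Er g)"

definition eps_thr :: "(real \<Rightarrow> ('a::real_normed_vector \<Rightarrow> ereal) set) \<Rightarrow> ereal" where
  "eps_thr P = Inf {ereal \<epsilon> | \<epsilon>. \<epsilon> > 0 \<and> Er_fam (P \<epsilon>) = 0}"

end

theory Submission
  imports Defs
begin

(*
  The outer inequalities are monotonicity: linear perturbations are perturbations, and the
  threshold of a larger family can only be smaller.

  For eps_thr (Ptb_wl f) <= |df|_bd take x in S_f^= and y on the boundary of df(x) with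
  |y| < eps, and y + v outside df(x) with |v| small. Tilting f by v - y keeps x in the zero
  set; at a point u where f u < (y + v)(u - x) the tilted function is at most 2 v(u - x),
  while its sublevel set lies where v(. - x) <= 0, at distance at least v(u - x) / |v| from u.
  So its error bound modulus is at most 2 |v|.

  For |df|_bd <= eps_thr (Ptb f) let b = |df|_bd and suppose g = f + p in Ptb(f, eps) had
  g u0 / d(u0, S_g) < lam < b - eps. Ekeland's principle for the positive part of g gives
  v outside S_g at which g has slope at most lam; by convexity this slope bound is global,
  and Hahn-Banach turns it into a subgradient of f at v of norm at most lam + xi. That bounds
  tau (f, x, xi, |p x|) by lam + xi (when 0 is interior to df(x), because f grows like
  rho |. - x| for every rho below the distance from 0 to the boundary of df(x)), and the
  defining inequality of Ptb then forces b - eps <= lam.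
*)

section \<open>Hahn-Banach: linear minorants of sublinear and convex functions\<close>

definition sublinear :: "('a::real_vector \<Rightarrow> real) \<Rightarrow> bool" where
  "sublinear q \<longleftrightarrow> (\<forall>x y. q (x + y) \<le> q x + q y) \<and> (\<forall>c x. c > 0 \<longrightarrow> q (c *\<^sub>R x) \<le> c * q x)"

lemma sublinear_add: "sublinear q \<Longrightarrow> q (x + y) \<le> q x + q y"
  by (simp add: sublinear_def)

lemma sublinear_scaleR:
  assumes "sublinear q" "c > 0"
  shows "q (c *\<^sub>R x) = c * q x"
proof (rule antisym)
  show "q (c *\<^sub>R x) \<le> c * q x" using assms by (simp add: sublinear_def)
  have "q (inverse c *\<^sub>R y) \<le> inverse c * q y" for y
    using assms by (simp add: sublinear_def)
  from this[of "c *\<^sub>R x"] show "c * q x \<le> q (c *\<^sub>R x)" using assms(2) by (simp add: field_simps)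
qed

lemma sublinear_zero: "sublinear q \<Longrightarrow> q 0 = 0"
  using sublinear_scaleR[of q 2 0] by simp

lemma sublinear_neg_le: "sublinear q \<Longrightarrow> - q (- x) \<le> q x"
  using sublinear_add[of q x "- x"] sublinear_zero[of q] by simp

lemma sublinear_chain_Inf:
  fixes C :: "('a::real_vector \<Rightarrow> real) set"
  assumes ne: "C \<noteq> {}" and sub: "\<And>s. s \<in> C \<Longrightarrow> sublinear s \<and> (\<forall>x. s x \<le> q x)"
    and chain: "\<And>s t. s \<in> C \<Longrightarrow> t \<in> C \<Longrightarrow> (\<forall>x. s x \<le> t x) \<or> (\<forall>x. t x \<le> s x)"
  shows "sublinear (\<lambda>x. INF s\<in>C. s x)" and "\<And>s x. s \<in> C \<Longrightarrow> (INF s\<in>C. s x) \<le> s x"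
proof -
  define u where "u = (\<lambda>x. INF s\<in>C. s x)"
  have bdd: "bdd_below ((\<lambda>s. s x) ` C)" for x
  proof (rule bdd_belowI2)
    fix s assume "s \<in> C"
    then show "- q (- x) \<le> s x"
      using sub sublinear_neg_le[of s x] by (meson neg_le_iff_le order_trans)
  qed
  have low: "u x \<le> s x" if "s \<in> C" for s x
    unfolding u_def using that by (rule cINF_lower[OF bdd])
  then show "(INF s\<in>C. s x) \<le> s x" if "s \<in> C" for s x
    using that by (simp add: u_def)
  have great: "(\<And>s. s \<in> C \<Longrightarrow> m \<le> s x) \<Longrightarrow> m \<le> u x" for m x
    unfolding u_def using ne by (intro cINF_greatest) auto
  have "u (x + y) - s x \<le> t y" if "s \<in> C" "t \<in> C" for s t x y
    \<comment> \<open>compare s and t and use the subadditivity of the smaller one\<close>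
    using chain[OF that] low[OF that(1), of "x + y"] low[OF that(2), of "x + y"]
      sublinear_add[of s x y] sublinear_add[of t x y] sub[OF that(1)] sub[OF that(2)]
    by (smt (verit))
  then have "u (x + y) - u y \<le> s x" if "s \<in> C" for s x y
    using that great by (smt (verit))
  then have add: "u (x + y) \<le> u x + u y" for x y
    using great by (smt (verit))
  have "u (c *\<^sub>R x) / c \<le> s x" if "c > 0" "s \<in> C" for c x s
    using low[OF that(2), of "c *\<^sub>R x"] sublinear_scaleR[of s c x] sub[OF that(2)] that(1)
    by (simp add: divide_le_eq mult.commute)
  then have "u (c *\<^sub>R x) / c \<le> u x" if "c > 0" for c x
    using that great by blast
  then have "u (c *\<^sub>R x) \<le> c * u x" if "c > 0" for c x
    using that by (simp add: divide_le_eq mult.commute)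
  with add have "sublinear u" by (simp add: sublinear_def)
  then show "sublinear (\<lambda>x. INF s\<in>C. s x)" by (simp add: u_def)
qed

lemma sublinear_directional_Inf:
  fixes m :: "'a::real_vector \<Rightarrow> real" and d :: 'a
  assumes m: "sublinear m"
  defines "m' \<equiv> \<lambda>x. INF t\<in>{0..}. m (x + t *\<^sub>R d) - t * m d"
  shows "sublinear m'" and "\<And>x. m' x \<le> m x" and "m' (- d) \<le> - m d"
proof -
  have scale: "m (t *\<^sub>R d) = t * m d" if "t \<ge> 0" for t
    using sublinear_scaleR[OF m, of t d] sublinear_zero[OF m] that
    by (cases "t = 0") auto
  have bdd: "bdd_below ((\<lambda>t. m (x + t *\<^sub>R d) - t * m d) ` {0..})" for x
  proof (rule bdd_belowI2)
    fix t :: real assume "t \<in> {0..}"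
    then show "- m (- x) \<le> m (x + t *\<^sub>R d) - t * m d"
      using sublinear_add[OF m, of "x + t *\<^sub>R d" "- x"] scale[of t] by simp
  qed
  have low: "t \<ge> 0 \<Longrightarrow> m' x \<le> m (x + t *\<^sub>R d) - t * m d" for x t
    unfolding m'_def by (rule cINF_lower[OF bdd]) auto
  have great: "(\<And>t. t \<ge> 0 \<Longrightarrow> z \<le> m (x + t *\<^sub>R d) - t * m d) \<Longrightarrow> z \<le> m' x" for z x
    unfolding m'_def by (intro cINF_greatest) auto
  show "m' x \<le> m x" for x using low[of 0 x] by simp
  show "m' (- d) \<le> - m d" using low[of 1 "- d"] sublinear_zero[OF m] by simp
  have "m' (x + y) - (m (x + s *\<^sub>R d) - s * m d) \<le> m (y + t *\<^sub>R d) - t * m d"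
    if "s \<ge> 0" "t \<ge> 0" for s t x y
    using low[of "s + t" "x + y"] sublinear_add[OF m, of "x + s *\<^sub>R d" "y + t *\<^sub>R d"] that
    by (simp add: algebra_simps)
  then have "m' (x + y) - (m (x + s *\<^sub>R d) - s * m d) \<le> m' y" if "s \<ge> 0" for s x y
    using that great by blast
  then have "m' (x + y) - m' y \<le> m (x + s *\<^sub>R d) - s * m d" if "s \<ge> 0" for s x y
    using that by (simp add: algebra_simps)
  then have "m' (x + y) - m' y \<le> m' x" for x y
    using great by blast
  then have add: "m' (x + y) \<le> m' x + m' y" for x y
    by (simp add: algebra_simps)
  have "m' (c *\<^sub>R x) \<le> c * (m (x + t *\<^sub>R d) - t * m d)" if "c > 0" "t \<ge> 0" for c t x
    using low[of "c * t" "c *\<^sub>R x"] sublinear_scaleR[OF m that(1), of "x + t *\<^sub>R d"] that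
    by (simp add: algebra_simps)
  then have "m' (c *\<^sub>R x) / c \<le> m (x + t *\<^sub>R d) - t * m d" if "c > 0" "t \<ge> 0" for c t x
    using that by (simp add: divide_le_eq mult.commute)
  then have "m' (c *\<^sub>R x) / c \<le> m' x" if "c > 0" for c x
    using that great by blast
  then have "m' (c *\<^sub>R x) \<le> c * m' x" if "c > 0" for c x
    using that by (simp add: divide_le_eq mult.commute)
  with add show "sublinear m'" by (simp add: sublinear_def)
qed

lemma sublinear_minimal_imp_linear:
  assumes m: "sublinear m"
    and minimal: "\<And>m'. sublinear m' \<Longrightarrow> (\<forall>x. m' x \<le> m x) \<Longrightarrow> m' = m"
  shows "linear m"
proof -
  have neg: "m (- x) = - m x" for x
  proof -
    define m' where "m' = (\<lambda>y. INF t\<in>{0..}. m (y + t *\<^sub>R x) - t * m x)"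
    have "sublinear m'" "\<And>y. m' y \<le> m y" "m' (- x) \<le> - m x"
      unfolding m'_def by (rule sublinear_directional_Inf[OF m])+
    moreover from calculation(1,2) have "m' = m" by (intro minimal) auto
    ultimately have "m (- x) \<le> - m x" by simp
    then show ?thesis using sublinear_neg_le[OF m, of "- x"] by simp
  qed
  have add: "m (x + y) = m x + m y" for x y
  proof -
    have "m (- (x + y)) \<le> m (- x) + m (- y)"
      using sublinear_add[OF m, of "- x" "- y"] by (simp add: add.commute)
    then show ?thesis using sublinear_add[OF m, of x y] neg[of "x + y"] neg[of x] neg[of y] by linarith
  qed
  have scale: "m (c *\<^sub>R x) = c * m x" for c x
  proof (cases c "0::real" rule: linorder_cases)
    case less
    then show ?thesis using sublinear_scaleR[OF m, of "- c" x] neg[of "(- c) *\<^sub>R x"] by simp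
  qed (use sublinear_zero[OF m] sublinear_scaleR[OF m] in auto)
  show "linear m" by (rule linearI) (use add scale in auto)
qed

theorem sublinear_linear_minorant:
  fixes q :: "'a::real_vector \<Rightarrow> real"
  assumes "sublinear q"
  shows "\<exists>L. linear L \<and> (\<forall>x. L x \<le> q x)"
proof -
  define A where "A = {s. sublinear s \<and> (\<forall>x. s x \<le> q x)}"
  define P where "P = (\<lambda>a b::'a \<Rightarrow> real. \<forall>x. b x \<le> a x)"
  have po: "partial_order_on A (relation_of P A)"
    by (rule partial_order_on_relation_ofI) (auto simp: P_def intro: order_trans, rule ext, meson antisym)
  have chains: "\<exists>u \<in> A. \<forall>s \<in> C. P s u" if C: "C \<in> Chains (relation_of P A)" for C
  proof (cases "C = {}")
    case True
    have "q \<in> A" using assms by (simp add: A_def)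
    with True show ?thesis by blast
  next
    case False
    have sub: "s \<in> C \<Longrightarrow> sublinear s \<and> (\<forall>x. s x \<le> q x)" for s
      using Chains_relation_of[OF C] by (auto simp: A_def)
    have chain: "s \<in> C \<Longrightarrow> t \<in> C \<Longrightarrow> (\<forall>x. s x \<le> t x) \<or> (\<forall>x. t x \<le> s x)" for s t
      using C unfolding Chains_def relation_of_def P_def by blast
    define u where "u = (\<lambda>x. INF s\<in>C. s x)"
    have u: "sublinear u" "\<And>s x. s \<in> C \<Longrightarrow> u x \<le> s x"
      using sublinear_chain_Inf[OF False sub chain] unfolding u_def by blast+
    obtain s0 where "s0 \<in> C" using False by blast
    then have "u x \<le> q x" for x
      using u(2)[of s0 x] sub[of s0] by (meson order_trans)
    with u have "u \<in> A" by (simp add: A_def)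
    moreover have "\<forall>s \<in> C. P s u" using u(2) by (simp add: P_def)
    ultimately show ?thesis by blast
  qed
  obtain m where "m \<in> A" and max: "\<forall>a \<in> A. P m a \<longrightarrow> a = m"
    using predicate_Zorn[OF po chains] by blast
  then have "sublinear m" and mq: "\<forall>x. m x \<le> q x" by (simp_all add: A_def)
  moreover have "m' = m" if "sublinear m'" "\<forall>x. m' x \<le> m x" for m'
    using max that mq by (auto simp: A_def P_def intro: order_trans)
  ultimately show ?thesis using sublinear_minimal_imp_linear by blast
qed

lemma convex_perspective_subadditive:
  fixes a :: "'a::real_normed_vector \<Rightarrow> real"
  assumes a: "convex_on D a" and M: "M \<ge> 0"
    and y: "y1 \<in> D" "y2 \<in> D" and t: "t1 > 0" "t2 > 0"
  shows "\<exists>t>0. \<exists>y\<in>D. (a y + M * norm (t *\<^sub>R (w1 + w2) - y)) / t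
           \<le> (a y1 + M * norm (t1 *\<^sub>R w1 - y1)) / t1 + (a y2 + M * norm (t2 *\<^sub>R w2 - y2)) / t2"
proof (intro exI bexI conjI)
  define T where "T = t1 + t2"
  have T: "T > 0" using t by (simp add: T_def)
  define s where "s = t1 / T"
  have s: "0 \<le> s" "s \<le> 1" "1 - s = t2 / T" using t T by (auto simp: s_def T_def field_simps)
  define y where "y = (1 - s) *\<^sub>R y1 + s *\<^sub>R y2"
  show "y \<in> D" unfolding y_def using convex_on_imp_convex[OF a] y s by (simp add: convexD)
  show c: "t1 * t2 / T > 0" using t T by simp
  \<comment> \<open>the combination is chosen so that the two weighted residuals add up exactly\<close>
  have "(t1 * t2 / T) *\<^sub>R (w1 + w2) - y
        = (1 - s) *\<^sub>R (t1 *\<^sub>R w1 - y1) + s *\<^sub>R (t2 *\<^sub>R w2 - y2)"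
    using T unfolding y_def s(3) by (simp add: s_def algebra_simps)
  then have "norm ((t1 * t2 / T) *\<^sub>R (w1 + w2) - y)
             \<le> (1 - s) * norm (t1 *\<^sub>R w1 - y1) + s * norm (t2 *\<^sub>R w2 - y2)"
    using s t T norm_triangle_ineq[of "(1 - s) *\<^sub>R (t1 *\<^sub>R w1 - y1)" "s *\<^sub>R (t2 *\<^sub>R w2 - y2)"] by simp
  moreover have "a y \<le> (1 - s) * a y1 + s * a y2"
    unfolding y_def by (rule convex_onD[OF a s(1,2) y])
  ultimately have "a y + M * norm ((t1 * t2 / T) *\<^sub>R (w1 + w2) - y)
      \<le> (1 - s) * (a y1 + M * norm (t1 *\<^sub>R w1 - y1)) + s * (a y2 + M * norm (t2 *\<^sub>R w2 - y2))"
    using mult_left_mono[OF _ M] by (fastforce simp: algebra_simps)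
  also have "\<dots> = (t1 * t2 / T) * ((a y1 + M * norm (t1 *\<^sub>R w1 - y1)) / t1 + (a y2 + M * norm (t2 *\<^sub>R w2 - y2)) / t2)"
  proof -
    have "(t2 / T) * X1 + (t1 / T) * X2 = (t1 * t2 / T) * (X1 / t1 + X2 / t2)" for X1 X2
      using t T by (simp add: field_simps)
    then show ?thesis using s(3) unfolding s_def by simp
  qed
  finally show "(a y + M * norm ((t1 * t2 / T) *\<^sub>R (w1 + w2) - y)) / (t1 * t2 / T)
      \<le> (a y1 + M * norm (t1 *\<^sub>R w1 - y1)) / t1 + (a y2 + M * norm (t2 *\<^sub>R w2 - y2)) / t2"
    using c by (simp only: pos_divide_le_eq mult.commute)
qed

\<comment> \<open>the directional derivative at 0 of the inf-convolution of a with M * norm\<close>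
definition conic_minorant :: "('a::real_normed_vector \<Rightarrow> real) \<Rightarrow> 'a set \<Rightarrow> real \<Rightarrow> 'a \<Rightarrow> real" where
  "conic_minorant a D M w = Inf {(a y + M * norm (t *\<^sub>R w - y)) / t | t y. t > 0 \<and> y \<in> D}"

lemma conic_minorant_quotient_lower:
  fixes a :: "'a::real_normed_vector \<Rightarrow> real"
  assumes M: "M \<ge> 0" and lower: "\<And>y. y \<in> D \<Longrightarrow> - M * norm y \<le> a y" and "t > 0" "y \<in> D"
  shows "- M * norm w \<le> (a y + M * norm (t *\<^sub>R w - y)) / t"
proof -
  have "norm y \<le> norm (t *\<^sub>R w - y) + t * norm w"
    using norm_triangle_ineq4[of "t *\<^sub>R w" "t *\<^sub>R w - y"] \<open>t > 0\<close> by simp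
  then have "M * norm y \<le> M * norm (t *\<^sub>R w - y) + M * (t * norm w)"
    using mult_left_mono[OF _ M] by (fastforce simp: distrib_left)
  then have "- M * (t * norm w) \<le> a y + M * norm (t *\<^sub>R w - y)"
    using lower[OF \<open>y \<in> D\<close>] by linarith
  then show ?thesis using \<open>t > 0\<close> by (simp add: le_divide_eq mult.commute mult.left_commute)
qed

lemma conic_minorant_le:
  fixes a :: "'a::real_normed_vector \<Rightarrow> real"
  assumes "M \<ge> 0" and "\<And>y. y \<in> D \<Longrightarrow> - M * norm y \<le> a y" and "t > 0" "y \<in> D"
  shows "conic_minorant a D M w \<le> (a y + M * norm (t *\<^sub>R w - y)) / t"
  unfolding conic_minorant_def
proof (rule cInf_lower)
  have "\<forall>s \<in> {(a y + M * norm (t *\<^sub>R w - y)) / t | t y. t > 0 \<and> y \<in> D}. - M * norm w \<le> s"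
    using conic_minorant_quotient_lower[of M D a, OF assms(1,2)] by blast
  then show "bdd_below {(a y + M * norm (t *\<^sub>R w - y)) / t | t y. t > 0 \<and> y \<in> D}"
    by (auto simp: bdd_below_def)
qed (use assms(3,4) in blast)

lemma conic_minorant_greatest:
  assumes "D \<noteq> {}" and "\<And>t y. t > 0 \<Longrightarrow> y \<in> D \<Longrightarrow> z \<le> (a y + M * norm (t *\<^sub>R w - y)) / t"
  shows "z \<le> conic_minorant a D M w"
  unfolding conic_minorant_def
proof (rule cInf_greatest)
  obtain y where "y \<in> D" using assms(1) by blast
  then have "(a y + M * norm (1 *\<^sub>R w - y)) / 1 \<in> {(a y + M * norm (t *\<^sub>R w - y)) / t | t y. t > 0 \<and> y \<in> D}"
    by fastforce
  then show "{(a y + M * norm (t *\<^sub>R w - y)) / t | t y. t > 0 \<and> y \<in> D} \<noteq> {}" by blast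
qed (use assms(2) in blast)

lemma sublinear_conic_minorant:
  fixes a :: "'a::real_normed_vector \<Rightarrow> real"
  assumes a: "convex_on D a" and "D \<noteq> {}" and M: "M \<ge> 0"
    and lower: "\<And>y. y \<in> D \<Longrightarrow> - M * norm y \<le> a y"
  shows "sublinear (conic_minorant a D M)"
proof -
  let ?q = "conic_minorant a D M"
  have le: "?q w \<le> (a y + M * norm (t *\<^sub>R w - y)) / t" if "t > 0" "y \<in> D" for t y w
    using M lower that by (rule conic_minorant_le)
  note greatest = conic_minorant_greatest[OF \<open>D \<noteq> {}\<close>]
  have "?q (w1 + w2) - (a y1 + M * norm (t1 *\<^sub>R w1 - y1)) / t1 \<le> (a y2 + M * norm (t2 *\<^sub>R w2 - y2)) / t2"
    if ty: "t1 > 0" "y1 \<in> D" "t2 > 0" "y2 \<in> D" for t1 y1 t2 y2 w1 w2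
  proof -
    obtain t y where "t > 0" "y \<in> D" and comb:
      "(a y + M * norm (t *\<^sub>R (w1 + w2) - y)) / t
         \<le> (a y1 + M * norm (t1 *\<^sub>R w1 - y1)) / t1 + (a y2 + M * norm (t2 *\<^sub>R w2 - y2)) / t2"
      using convex_perspective_subadditive[OF a M ty(2,4,1,3)] by blast
    show ?thesis using le[OF \<open>t > 0\<close> \<open>y \<in> D\<close>, of "w1 + w2"] comb by linarith
  qed
  then have "?q (w1 + w2) - (a y1 + M * norm (t1 *\<^sub>R w1 - y1)) / t1 \<le> ?q w2"
    if "t1 > 0" "y1 \<in> D" for t1 y1 w1 w2
    using that by (intro greatest) auto
  then have "?q (w1 + w2) - ?q w2 \<le> (a y1 + M * norm (t1 *\<^sub>R w1 - y1)) / t1"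
    if "t1 > 0" "y1 \<in> D" for t1 y1 w1 w2
    using that by (smt (verit))
  then have "?q (w1 + w2) - ?q w2 \<le> ?q w1" for w1 w2
    by (intro greatest) auto
  then have add: "?q (w1 + w2) \<le> ?q w1 + ?q w2" for w1 w2
    by (simp add: algebra_simps)
  have "?q (c *\<^sub>R w) / c \<le> (a y + M * norm (t *\<^sub>R w - y)) / t" if "c > 0" "t > 0" "y \<in> D" for c t y w
  proof -
    have "?q (c *\<^sub>R w) \<le> (a y + M * norm ((t / c) *\<^sub>R (c *\<^sub>R w) - y)) / (t / c)"
      using that by (intro le) auto
    also have "\<dots> = c * ((a y + M * norm (t *\<^sub>R w - y)) / t)" using that by simp
    finally show ?thesis using that(1) by (simp add: divide_le_eq mult.commute)
  qed
  then have "?q (c *\<^sub>R w) / c \<le> ?q w" if "c > 0" for c w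
    using that by (intro greatest) auto
  then have "?q (c *\<^sub>R w) \<le> c * ?q w" if "c > 0" for c w
    using that by (simp add: divide_le_eq mult.commute)
  with add show ?thesis by (simp add: sublinear_def)
qed

theorem convex_on_bounded_linear_minorant:
  fixes a :: "'a::real_normed_vector \<Rightarrow> real"
  assumes a: "convex_on D a" and D0: "0 \<in> D" "a 0 = 0" and M: "M \<ge> 0"
    and lower: "\<And>y. y \<in> D \<Longrightarrow> - M * norm y \<le> a y"
  shows "\<exists>L. bounded_linear L \<and> (\<forall>y\<in>D. L y \<le> a y) \<and> (\<forall>y. \<bar>L y\<bar> \<le> M * norm y)"
proof -
  let ?q = "conic_minorant a D M"
  have "sublinear ?q" using D0(1) by (intro sublinear_conic_minorant[OF a _ M lower]) auto
  then obtain L where L: "linear L" "\<And>x. L x \<le> ?q x"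
    using sublinear_linear_minorant by blast
  have le: "?q w \<le> (a y + M * norm (t *\<^sub>R w - y)) / t" if "t > 0" "y \<in> D" for t y w
    using M lower that by (rule conic_minorant_le)
  have qM: "?q w \<le> M * norm w" for w
    using le[OF _ D0(1), of 1 w] D0(2) by simp
  have "?q y \<le> a y" if "y \<in> D" for y
    using le[OF _ that, of 1 y] by simp
  then have below: "L y \<le> a y" if "y \<in> D" for y using L(2)[of y] that by fastforce
  have bound: "\<bar>L y\<bar> \<le> M * norm y" for y
    using L(2)[of y] L(2)[of "- y"] qM[of y] qM[of "- y"] linear_neg[OF L(1), of y] by simp
  have "bounded_linear L"
    using L(1) bound by (intro bounded_linear_intro[where K = M])
      (auto simp: linear_add linear_scale mult.commute)
  then show ?thesis using below bound by blast
qed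

section \<open>Ekeland's variational principle\<close>

lemma closed_sublevel_add_continuous:
  fixes f :: "'a::metric_space \<Rightarrow> ereal" and h :: "'a \<Rightarrow> real"
  assumes f: "\<And>T. closed {u. f u \<le> ereal T}" and h: "continuous_on UNIV h"
  shows "closed {u. f u + ereal (h u) \<le> ereal T}"
proof (rule closed_sequential_limits[THEN iffD2], intro allI impI, elim conjE)
  fix x l assume x: "\<forall>n. x n \<in> {u. f u + ereal (h u) \<le> ereal T}" and xl: "x \<longlonglongrightarrow> l"
  have hx: "(\<lambda>n. h (x n)) \<longlonglongrightarrow> h l"
    using continuous_on_tendsto_compose[OF h xl] by simp
  have "f l \<le> ereal (T - h l + \<delta>)" if "\<delta> > 0" for \<delta>
  proof -
    have "\<forall>\<^sub>F n in sequentially. h l - \<delta> < h (x n)"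
      using order_tendstoD(1)[OF hx] that by simp
    then have "\<forall>\<^sub>F n in sequentially. x n \<in> {u. f u \<le> ereal (T - h l + \<delta>)}"
    proof (rule eventually_mono)
      fix n assume "h l - \<delta> < h (x n)"
      moreover have "f (x n) \<le> ereal (T - h (x n))"
        using x[rule_format, of n] by (cases "f (x n)") auto
      ultimately show "x n \<in> {u. f u \<le> ereal (T - h l + \<delta>)}"
        by (auto elim: order_trans)
    qed
    from Lim_in_closed_set[OF f this _ xl] show ?thesis by simp
  qed
  then have "f l + ereal (h l) \<le> ereal T + ereal e" if "e > 0" for e
    using that by (cases "f l") (auto simp: algebra_simps, smt (verit))
  then have "f l + ereal (h l) \<le> ereal T" by (rule ereal_le_epsilon2)
  then show "l \<in> {u. f u + ereal (h u) \<le> ereal T}" by simp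
qed

definition ekeland_set :: "('a::metric_space \<Rightarrow> real) \<Rightarrow> 'a set \<Rightarrow> real \<Rightarrow> 'a \<Rightarrow> 'a set" where
  "ekeland_set \<psi> D lam w = {u \<in> D. \<psi> u + lam * dist u w \<le> \<psi> w}"

lemma ekeland_set_self: "w \<in> D \<Longrightarrow> w \<in> ekeland_set \<psi> D lam w"
  by (simp add: ekeland_set_def)

lemma ekeland_set_trans:
  assumes "0 \<le> lam" "u \<in> ekeland_set \<psi> D lam w"
  shows "ekeland_set \<psi> D lam u \<subseteq> ekeland_set \<psi> D lam w"
proof
  fix z assume "z \<in> ekeland_set \<psi> D lam u"
  then have "z \<in> D" "\<psi> z + lam * dist z u \<le> \<psi> u" by (auto simp: ekeland_set_def)
  moreover have "\<psi> u + lam * dist u w \<le> \<psi> w" using assms(2) by (simp add: ekeland_set_def)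
  moreover have "lam * dist z w \<le> lam * dist z u + lam * dist u w"
    using mult_left_mono[OF dist_triangle[of z w u] assms(1)] by (simp add: distrib_left)
  ultimately show "z \<in> ekeland_set \<psi> D lam w" by (simp add: ekeland_set_def)
qed

lemma closed_ekeland_set:
  assumes closed: "\<And>T. closed {u \<in> D. \<psi> u \<le> T}"
  shows "closed (ekeland_set \<psi> D lam w)"
proof -
  define \<phi> where "\<phi> = (\<lambda>u. if u \<in> D then ereal (\<psi> u) else \<infinity>)"
  have "{u. \<phi> u \<le> ereal T} = {u \<in> D. \<psi> u \<le> T}" for T by (auto simp: \<phi>_def)
  then have "closed {u. \<phi> u + ereal (lam * dist u w) \<le> ereal (\<psi> w)}"
    using closed by (intro closed_sublevel_add_continuous continuous_on_mult continuous_on_dist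
        continuous_on_const continuous_on_id) auto
  also have "{u. \<phi> u + ereal (lam * dist u w) \<le> ereal (\<psi> w)} = ekeland_set \<psi> D lam w"
    by (auto simp: \<phi>_def ekeland_set_def)
  finally show ?thesis .
qed

lemma ekeland_set_halfway:
  fixes \<psi> :: "'a::metric_space \<Rightarrow> real"
  assumes nonneg: "\<And>u. u \<in> D \<Longrightarrow> 0 \<le> \<psi> u" and w: "w \<in> D"
  shows "\<exists>u \<in> ekeland_set \<psi> D lam w. 2 * \<psi> u \<le> \<psi> w + Inf (\<psi> ` ekeland_set \<psi> D lam w)"
proof -
  let ?S = "ekeland_set \<psi> D lam w"
  have self: "w \<in> ?S" using w by (rule ekeland_set_self)
  have bdd: "bdd_below (\<psi> ` ?S)"
    using nonneg by (intro bdd_belowI2[where m = 0]) (auto simp: ekeland_set_def)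
  show ?thesis
  proof (cases "Inf (\<psi> ` ?S) < \<psi> w")
    case True
    then obtain y where "y \<in> \<psi> ` ?S" "y < (\<psi> w + Inf (\<psi> ` ?S)) / 2"
      using cInf_less_iff[OF _ bdd, of "(\<psi> w + Inf (\<psi> ` ?S)) / 2"] self by auto
    then show ?thesis by force
  next
    case False
    then show ?thesis using self cInf_lower[OF imageI[OF self] bdd] by force
  qed
qed

lemma ekeland_shrinking_sequence:
  fixes \<psi> :: "'a::metric_space \<Rightarrow> real"
  assumes nonneg: "\<And>u. u \<in> D \<Longrightarrow> 0 \<le> \<psi> u" and u0: "u0 \<in> D" and lam: "lam > 0"
  defines "S \<equiv> ekeland_set \<psi> D lam"
  shows "\<exists>x C. x 0 = u0 \<and> (\<forall>n. x n \<in> D \<and> x (Suc n) \<in> S (x n)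
           \<and> (\<forall>u\<in>S (x n). \<forall>w\<in>S (x n). dist u w \<le> C / 2 ^ n))"
proof -
  have SD: "S w \<subseteq> D" and self: "w \<in> D \<Longrightarrow> w \<in> S w" for w
    by (auto simp: S_def ekeland_set_def)
  define m where "m = (\<lambda>w. Inf (\<psi> ` S w))"
  have bdd: "bdd_below (\<psi> ` S w)" for w
    using nonneg SD by (intro bdd_belowI2[where m = 0]) auto
  have m_le: "u \<in> S w \<Longrightarrow> m w \<le> \<psi> u" for u w
    unfolding m_def by (rule cInf_lower[OF _ bdd]) simp
  have "\<forall>w\<in>D. \<exists>u. u \<in> S w \<and> 2 * \<psi> u \<le> \<psi> w + m w"
    using ekeland_set_halfway[of D \<psi>, OF nonneg] unfolding S_def m_def by blast
  then obtain next_pt where "\<forall>w\<in>D. next_pt w \<in> S w \<and> 2 * \<psi> (next_pt w) \<le> \<psi> w + m w"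
    by (rule bchoice[THEN exE])
  then have next_pt: "\<And>w. w \<in> D \<Longrightarrow> next_pt w \<in> S w \<and> 2 * \<psi> (next_pt w) \<le> \<psi> w + m w"
    by blast
  define x where "x = rec_nat u0 (\<lambda>_ w. next_pt w)"
  have x0: "x 0 = u0" and x_Suc: "x (Suc n) = next_pt (x n)" for n by (simp_all add: x_def)
  have xD: "x n \<in> D" for n
  proof (induction n)
    case (Suc n)
    then show ?case using next_pt[OF Suc] SD by (auto simp: x_Suc)
  qed (simp add: x0 u0)
  have step: "x (Suc n) \<in> S (x n)" for n using next_pt[OF xD] x_Suc by simp
  define e where "e = (\<lambda>n. \<psi> (x n) - m (x n))"
  have m_mono: "m (x n) \<le> m (x (Suc n))" for n
    unfolding m_def using self[OF xD[of "Suc n"]] ekeland_set_trans[OF _ step[of n, unfolded S_def]] lam bdd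
    by (intro cInf_superset_mono) (auto simp: S_def)
  have half: "e (Suc n) \<le> e n / 2" for n
    using m_mono[of n] next_pt[OF xD[of n]] unfolding e_def x_Suc[of n] by (auto simp: field_simps)
  have e: "e n \<le> e 0 / 2 ^ n" for n
  proof (induction n)
    case (Suc n)
    have "e n / 2 \<le> e 0 / 2 ^ n / 2" using Suc.IH by (simp add: divide_right_mono)
    then show ?case using half[of n] by simp
  qed simp
  have radius: "lam * dist u (x n) \<le> e 0 / 2 ^ n" if "u \<in> S (x n)" for u n
    using that m_le[OF that] e[of n] by (simp add: S_def ekeland_set_def e_def)
  have "dist u w \<le> (2 * e 0 / lam) / 2 ^ n" if "u \<in> S (x n)" "w \<in> S (x n)" for u w n
  proof -
    have "lam * dist u w \<le> lam * dist u (x n) + lam * dist w (x n)"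
      using mult_left_mono[OF dist_triangle2[of u w "x n"], of lam] lam by (simp add: distrib_left)
    also have "\<dots> \<le> 2 * e 0 / 2 ^ n"
      using radius[OF that(1)] radius[OF that(2)] by simp
    finally show ?thesis using lam by (simp add: pos_le_divide_eq mult_ac)
  qed
  then show ?thesis using x0 xD step by blast
qed

theorem ekeland_variational_principle:
  fixes \<psi> :: "'a::complete_space \<Rightarrow> real"
  assumes closed: "\<And>T. closed {u \<in> D. \<psi> u \<le> T}" and nonneg: "\<And>u. u \<in> D \<Longrightarrow> 0 \<le> \<psi> u"
    and u0: "u0 \<in> D" and lam: "lam > 0"
  shows "\<exists>v\<in>D. \<psi> v + lam * dist v u0 \<le> \<psi> u0 \<and> (\<forall>u\<in>D. \<psi> v \<le> \<psi> u + lam * dist u v)"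
proof -
  define S where "S = ekeland_set \<psi> D lam"
  obtain x C where x0: "x 0 = u0" and xD: "\<And>n. x n \<in> D" and step: "\<And>n. x (Suc n) \<in> S (x n)"
    and diam: "\<And>n u w. u \<in> S (x n) \<Longrightarrow> w \<in> S (x n) \<Longrightarrow> dist u w \<le> C / 2 ^ n"
    using ekeland_shrinking_sequence[of D \<psi>, OF nonneg u0 lam] unfolding S_def by blast
  have trans: "u \<in> S w \<Longrightarrow> S u \<subseteq> S w" for u w
    using ekeland_set_trans[of lam u \<psi> D w] lam by (simp add: S_def)
  have nested: "S (x (Suc n)) \<subseteq> S (x n)" for n using trans[OF step] .
  have "\<exists>v. \<Inter>(range (\<lambda>n. S (x n))) = {v}"
  proof (rule decreasing_closed_nest_sing)
    show "closed (S (x n))" "S (x n) \<noteq> {}" for n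
      using closed_ekeland_set[OF closed] ekeland_set_self[OF xD[of n], of \<psi> lam] by (auto simp: S_def)
    show "S (x n) \<subseteq> S (x k)" if "k \<le> n" for k n
      using lift_Suc_antimono_le[of "\<lambda>n. S (x n)", OF nested that] .
    fix \<epsilon> :: real assume "\<epsilon> > 0"
    have "(\<lambda>n. C / 2 ^ n) \<longlonglongrightarrow> 0"
      by (intro tendsto_divide_0[OF tendsto_const]) (simp add: filterlim_realpow_sequentially_gt1)
    from order_tendstoD(2)[OF this \<open>\<epsilon> > 0\<close>] obtain n where "C / 2 ^ n < \<epsilon>"
      unfolding eventually_sequentially by blast
    then show "\<exists>n. \<forall>u\<in>S (x n). \<forall>w\<in>S (x n). dist u w < \<epsilon>"
      using diam by (meson le_less_trans)
  qed
  then obtain v where v: "\<Inter>(range (\<lambda>n. S (x n))) = {v}" by blast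
  then have vS: "v \<in> S (x n)" for n by blast
  show ?thesis
  proof (intro bexI conjI ballI)
    show "v \<in> D" using vS[of 0] by (simp add: S_def ekeland_set_def)
    show "\<psi> v + lam * dist v u0 \<le> \<psi> u0" using vS[of 0] by (simp add: S_def ekeland_set_def x0)
    show "\<psi> v \<le> \<psi> u + lam * dist u v" if "u \<in> D" for u
    proof (rule ccontr)
      assume less: "\<not> \<psi> v \<le> \<psi> u + lam * dist u v"
      then have "u \<in> S v" using that by (simp add: S_def ekeland_set_def)
      then have "u \<in> \<Inter>(range (\<lambda>n. S (x n)))" using trans vS by blast
      then have "u = v" using v by blast
      then show False using less by simp
    qed
  qed
qed

section \<open>Extended-real convex functions and their subdifferentials\<close>

lemma convex_on_lipschitz_on:
  fixes p :: "'a::real_normed_vector \<Rightarrow> real"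
  assumes p: "convex_on UNIV p" and \<xi>: "\<xi> \<ge> 0" and at_x: "\<And>u. \<bar>p u - p x\<bar> \<le> \<xi> * norm (u - x)"
  shows "\<xi>-lipschitz_on UNIV p"
proof -
  have one_sided: "p a - p b \<le> \<xi> * norm (a - b)" for a b
  proof (rule field_le_epsilon)
    fix \<delta> :: real assume "\<delta> > 0"
    \<comment> \<open>push a far out along the ray from b through a, where the bound at x applies\<close>
    define K where "K = p x - p b + \<xi> * norm (b - x)"
    define t where "t = max 1 (K / \<delta>)"
    define c where "c = b + t *\<^sub>R (a - b)"
    have t: "t \<ge> 1" by (simp add: t_def)
    have "K \<le> t * \<delta>" using \<open>\<delta> > 0\<close> by (simp add: t_def divide_le_eq max_def)
    then have Kt: "K / t \<le> \<delta>" using t by (simp add: divide_le_eq mult.commute)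
    have "a = (1 - 1/t) *\<^sub>R b + (1/t) *\<^sub>R c"
      using t by (simp add: c_def algebra_simps)
    then have "p a \<le> (1 - 1/t) * p b + (1/t) * p c"
      using convex_onD[OF p, of "1/t" b c] t by simp
    then have "p a - p b \<le> (1/t) * (p c - p b)" by (simp add: algebra_simps)
    moreover have "norm (c - x) \<le> norm (b - x) + t * norm (a - b)"
    proof -
      have "c - x = (b - x) + t *\<^sub>R (a - b)" by (simp add: c_def algebra_simps)
      then show ?thesis using norm_triangle_ineq[of "b - x" "t *\<^sub>R (a - b)"] t by (simp only:) simp
    qed
    then have "\<xi> * norm (c - x) \<le> \<xi> * (norm (b - x) + t * norm (a - b))"
      by (rule mult_left_mono[OF _ \<xi>])
    then have "p c - p b \<le> K + \<xi> * t * norm (a - b)"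
      using at_x[of c] unfolding K_def by (simp add: algebra_simps abs_le_iff)
    ultimately have "p a - p b \<le> (1/t) * (K + \<xi> * t * norm (a - b))"
      using t by (smt (verit) divide_pos_pos mult_left_mono)
    also have "\<dots> = K / t + \<xi> * norm (a - b)" using t by (simp add: field_simps)
    finally show "p a - p b \<le> \<xi> * norm (a - b) + \<delta>" using Kt by linarith
  qed
  then have "dist (p a) (p b) \<le> \<xi> * dist a b" for a b
    using one_sided[of a b] one_sided[of b a] by (simp add: dist_real_def dist_norm abs_le_iff norm_minus_commute)
  then show ?thesis using \<xi> by (intro lipschitz_onI)
qed

lemma convex_funD:
  assumes "convex_fun f" "f a \<le> ereal A" "f b \<le> ereal B" "0 \<le> t" "t \<le> 1"
  shows "f ((1 - t) *\<^sub>R a + t *\<^sub>R b) \<le> ereal ((1 - t) * A + t * B)"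
proof -
  have "(1 - t) *\<^sub>R (a, A) + t *\<^sub>R (b, B) \<in> {(x, s). f x \<le> ereal s}"
    using assms by (intro convexD_alt[where s = "{(x, s). f x \<le> ereal s}"]) (auto simp: convex_fun_def)
  then show ?thesis by simp
qed

lemma convex_funI:
  assumes "\<And>a b A B t. f a \<le> ereal A \<Longrightarrow> f b \<le> ereal B \<Longrightarrow> 0 \<le> t \<Longrightarrow> t \<le> 1 \<Longrightarrow>
             f ((1 - t) *\<^sub>R a + t *\<^sub>R b) \<le> ereal ((1 - t) * A + t * B)"
  shows "convex_fun f"
  unfolding convex_fun_def
proof (rule convexI)
  fix z1 z2 :: "'a \<times> real" and s1 s2 :: real
  assume "z1 \<in> {(x, s). f x \<le> ereal s}" "z2 \<in> {(x, s). f x \<le> ereal s}" "0 \<le> s1" "0 \<le> s2" "s1 + s2 = 1"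
  moreover obtain a A b B where "z1 = (a, A)" "z2 = (b, B)" by fastforce
  moreover have "s1 = 1 - s2" using \<open>s1 + s2 = 1\<close> by simp
  ultimately show "s1 *\<^sub>R z1 + s2 *\<^sub>R z2 \<in> {(x, s). f x \<le> ereal s}"
    using assms[of a A b B s2] by simp
qed

lemma convex_fun_add:
  assumes f: "convex_fun f" and p: "convex_on UNIV p"
  shows "convex_fun (\<lambda>u. f u + ereal (p u))"
proof (rule convex_funI)
  fix a b A B and t :: real
  assume le: "f a + ereal (p a) \<le> ereal A" "f b + ereal (p b) \<le> ereal B" and t: "0 \<le> t" "t \<le> 1"
  have "f a \<le> ereal (A - p a)" "f b \<le> ereal (B - p b)"
    using le by (cases "f a"; cases "f b"; simp)+
  from convex_funD[OF f this t]
  have "f ((1 - t) *\<^sub>R a + t *\<^sub>R b) \<le> ereal ((1 - t) * (A - p a) + t * (B - p b))" .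
  moreover have "p ((1 - t) *\<^sub>R a + t *\<^sub>R b) \<le> (1 - t) * p a + t * p b"
    using convex_onD[OF p t] by simp
  ultimately show "f ((1 - t) *\<^sub>R a + t *\<^sub>R b) + ereal (p ((1 - t) *\<^sub>R a + t *\<^sub>R b))
      \<le> ereal ((1 - t) * A + t * B)"
    by (cases "f ((1 - t) *\<^sub>R a + t *\<^sub>R b)") (auto simp: algebra_simps)
qed

lemma convex_fun_local_slope_imp_global:
  fixes g :: "'a::real_normed_vector \<Rightarrow> ereal"
  assumes g: "convex_fun g" and gv: "g v = ereal c" and r: "r > 0"
    and local: "\<And>w. norm (w - v) < r \<Longrightarrow> ereal (c - lam * norm (w - v)) \<le> g w"
  shows "ereal (c - lam * norm (u - v)) \<le> g u"
proof -
  have "c - lam * norm (u - v) \<le> B" if B: "g u \<le> ereal B" for B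
  proof (cases "u = v")
    case True
    then show ?thesis using B gv by simp
  next
    case False
    define t where "t = min 1 (r / (2 * norm (u - v)))"
    have t: "0 < t" "t \<le> 1" "t * norm (u - v) < r"
      using False r by (auto simp: t_def min_def field_simps)
    define w where "w = (1 - t) *\<^sub>R v + t *\<^sub>R u"
    have wv: "norm (w - v) = t * norm (u - v)"
      using t by (simp add: w_def algebra_simps flip: scaleR_diff_right)
    have "ereal (c - lam * (t * norm (u - v))) \<le> g w"
      using local[of w] wv t(3) by simp
    also have "g w \<le> ereal ((1 - t) * c + t * B)"
      unfolding w_def using convex_funD[OF g _ B, of v c t] gv t by simp
    finally have "t * (c - lam * norm (u - v)) \<le> t * B" by (simp add: algebra_simps)
    then show ?thesis using t(1) by simp
  qed
  then show ?thesis
  proof (cases "g u")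
    case MInf
    with \<open>\<And>B. g u \<le> ereal B \<Longrightarrow> _\<close>[of "c - lam * norm (u - v) - 1"] show ?thesis by simp
  qed simp_all
qed

lemma subdiff_closed: "closed (subdiff f x)"
proof (cases "\<bar>f x\<bar> = \<infinity>")
  case True
  then show ?thesis by (simp add: subdiff_def)
next
  case False
  then have "subdiff f x = (\<Inter>u. {xs. ereal (blinfun_apply xs (u - x)) \<le> f u - f x})"
    by (auto simp: subdiff_def)
  moreover have "closed {xs. ereal (blinfun_apply xs (u - x)) \<le> f u - f x}" for u
    by (intro closed_Collect_le continuous_on_ereal continuous_intros)
  ultimately show ?thesis by auto
qed

lemma convex_on_finite_part:
  fixes f :: "'a::real_vector \<Rightarrow> ereal"
  assumes f: "convex_fun f" and ninf: "\<And>u. f u \<noteq> -\<infinity>"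
  shows "convex_on {w. f (v + w) < \<infinity>} (\<lambda>w. real_of_ereal (f (v + w)))"
proof -
  define D where "D = {w. f (v + w) < \<infinity>}"
  have fin: "f (v + w) = ereal (real_of_ereal (f (v + w)))" if "w \<in> D" for w
    using that ninf[of "v + w"] by (cases "f (v + w)") (auto simp: D_def)
  have comb: "f (v + ((1 - t) *\<^sub>R w1 + t *\<^sub>R w2))
      \<le> ereal ((1 - t) * real_of_ereal (f (v + w1)) + t * real_of_ereal (f (v + w2)))"
    if "w1 \<in> D" "w2 \<in> D" "0 \<le> t" "t \<le> 1" for w1 w2 t
  proof -
    have "v + ((1 - t) *\<^sub>R w1 + t *\<^sub>R w2) = (1 - t) *\<^sub>R (v + w1) + t *\<^sub>R (v + w2)"
      by (simp add: algebra_simps)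
    then show ?thesis using convex_funD[OF f _ _ that(3,4)] fin that(1,2) by (metis order_refl)
  qed
  have D_comb: "(1 - t) *\<^sub>R w1 + t *\<^sub>R w2 \<in> D"
    if "w1 \<in> D" "w2 \<in> D" "0 \<le> t" "t \<le> 1" for w1 w2 t
    using comb[OF that] by (auto simp: D_def)
  have "convex_on D (\<lambda>w. real_of_ereal (f (v + w)))"
  proof (rule convex_onI)
    show "convex D" unfolding convex_alt using D_comb by blast
    fix t :: real and w1 w2 assume t: "0 < t" "t < 1" and w: "w1 \<in> D" "w2 \<in> D"
    from t have "0 \<le> t" "t \<le> 1" by linarith+
    from comb[OF w this] fin[OF D_comb[OF w this]]
    show "real_of_ereal (f (v + ((1 - t) *\<^sub>R w1 + t *\<^sub>R w2)))
        \<le> (1 - t) * real_of_ereal (f (v + w1)) + t * real_of_ereal (f (v + w2))"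
      by (metis ereal_less_eq(3))
  qed
  then show ?thesis by (simp add: D_def)
qed

lemma subdiff_nonempty_of_lipschitz_minorant:
  fixes f :: "'a::real_normed_vector \<Rightarrow> ereal"
  assumes f: "convex_fun f" and fv: "f v = ereal c" and K: "K \<ge> 0"
    and minorant: "\<And>u. ereal (c - K * norm (u - v)) \<le> f u"
  shows "\<exists>xs\<in>subdiff f v. norm xs \<le> K"
proof -
  define D where "D = {w. f (v + w) < \<infinity>}"
  define F where "F = (\<lambda>w. real_of_ereal (f (v + w)) - c)"
  have ninf: "f u \<noteq> -\<infinity>" for u using minorant[of u] by auto
  have fin: "f (v + w) = ereal (F w + c)" if "w \<in> D" for w
    using that ninf[of "v + w"] by (cases "f (v + w)") (auto simp: D_def F_def)
  have "convex_on D (\<lambda>w. real_of_ereal (f (v + w)))"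
    unfolding D_def by (rule convex_on_finite_part[OF f ninf])
  then have "convex_on D F"
    unfolding F_def by (intro convex_on_diff) (simp_all add: concave_on_const convex_on_imp_convex)
  moreover have "0 \<in> D" "F 0 = 0" using fv by (simp_all add: D_def F_def)
  moreover have "- K * norm w \<le> F w" if "w \<in> D" for w
    using minorant[of "v + w"] fin[OF that] by simp
  ultimately obtain L where L: "bounded_linear L" "\<And>w. w \<in> D \<Longrightarrow> L w \<le> F w" "\<And>w. \<bar>L w\<bar> \<le> K * norm w"
    using convex_on_bounded_linear_minorant[of D F K] K by auto
  have apply_L: "blinfun_apply (Blinfun L) = L" by (rule bounded_linear_Blinfun_apply[OF L(1)])
  have "ereal (L (u - v)) \<le> f u - f v" for u
  proof (cases "u - v \<in> D")
    case True
    then show ?thesis using L(2)[OF True] fin[OF True] fv by simp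
  qed (use fv in \<open>simp add: D_def\<close>)
  then have "Blinfun L \<in> subdiff f v" using fv by (simp add: subdiff_def apply_L)
  moreover have "norm (Blinfun L) \<le> K"
    by (rule norm_blinfun_bound) (use L(3) K apply_L in auto)
  ultimately show ?thesis by blast
qed

lemma exists_norming_blinfun:
  fixes e :: "'a::real_normed_vector"
  shows "\<exists>N::'a \<Rightarrow>\<^sub>L real. norm N \<le> 1 \<and> blinfun_apply N e = norm e"
proof -
  define a where "a = (\<lambda>w. norm (e + w) - norm e)"
  have "convex_on UNIV a"
  proof (rule convex_onI)
    fix t :: real and x y :: 'a assume t: "0 < t" "t < 1"
    have "e + ((1 - t) *\<^sub>R x + t *\<^sub>R y) = (1 - t) *\<^sub>R (e + x) + t *\<^sub>R (e + y)"
      by (simp add: algebra_simps)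
    then have "norm (e + ((1 - t) *\<^sub>R x + t *\<^sub>R y)) \<le> norm ((1 - t) *\<^sub>R (e + x)) + norm (t *\<^sub>R (e + y))"
      by (metis norm_triangle_ineq)
    also have "\<dots> = (1 - t) * norm (e + x) + t * norm (e + y)" using t by simp
    finally show "a ((1 - t) *\<^sub>R x + t *\<^sub>R y) \<le> (1 - t) * a x + t * a y"
      by (simp add: a_def algebra_simps)
  qed simp
  moreover have "- 1 * norm y \<le> a y" for y
    using norm_triangle_ineq4[of "e + y" y] by (simp add: a_def)
  ultimately obtain L where L: "bounded_linear L" "\<And>y. L y \<le> a y" "\<And>y. \<bar>L y\<bar> \<le> norm y"
    using convex_on_bounded_linear_minorant[of UNIV a 1] by (auto simp: a_def)
  have "L (- e) \<le> - norm e" using L(2)[of "- e"] by (simp add: a_def)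
  then have "L e = norm e"
    using L(3)[of e] linear_neg[OF bounded_linear.linear[OF L(1)], of e] by simp
  moreover have "norm (Blinfun L) \<le> 1"
    by (rule norm_blinfun_bound) (use L bounded_linear_Blinfun_apply[OF L(1)] in auto)
  ultimately show ?thesis using bounded_linear_Blinfun_apply[OF L(1)] by auto
qed

lemma mem_if_norm_le_edist_frontier:
  fixes C :: "'b::real_normed_vector set"
  assumes "0 \<in> interior C" "ereal \<rho> < edist 0 (frontier C)" "norm y \<le> \<rho>"
  shows "y \<in> C"
proof (rule ccontr)
  assume "y \<notin> C"
  moreover have "0 \<in> C" using assms(1) interior_subset by blast
  ultimately have "closed_segment 0 y \<inter> frontier C \<noteq> {}"
    by (intro connected_Int_frontier) auto
  then obtain z where z: "z \<in> closed_segment 0 y" "z \<in> frontier C" by blast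
  then have "frontier C \<noteq> {}" by blast
  then have "\<rho> < infdist 0 (frontier C)"
    using assms(2) by (simp add: edist_def)
  moreover have "infdist 0 (frontier C) \<le> norm y"
    using infdist_le[OF z(2), of 0] segment_bound1[OF z(1)] by simp
  ultimately show False using assms(3) by linarith
qed

lemma subdiff_interior_growth:
  fixes f :: "'a::real_normed_vector \<Rightarrow> ereal"
  assumes fx: "f x = 0" and int: "0 \<in> interior (subdiff f x)"
    and \<rho>: "0 \<le> \<rho>" "ereal \<rho> < edist 0 (frontier (subdiff f x))"
  shows "ereal (\<rho> * norm (w - x)) \<le> f w"
proof -
  obtain N where N: "norm N \<le> 1" "blinfun_apply N (w - x) = norm (w - x)"
    using exists_norming_blinfun by blast
  have "norm (\<rho> *\<^sub>R N) \<le> \<rho>" using N(1) \<rho>(1) by (simp add: mult_left_le)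
  then have "\<rho> *\<^sub>R N \<in> subdiff f x" by (rule mem_if_norm_le_edist_frontier[OF int \<rho>(2)])
  then have "ereal (blinfun_apply (\<rho> *\<^sub>R N) (w - x)) \<le> f w - f x"
    unfolding subdiff_def by blast
  then show ?thesis using N(2) fx by (simp add: blinfun.scaleR_left)
qed

lemma ekeland_convex_slope_point:
  fixes g :: "'a::banach \<Rightarrow> ereal"
  assumes closed: "\<And>T. closed {u. g u \<le> ereal T}" and conv: "convex_fun g"
    and gu0: "g u0 = ereal r" "0 < r" and lam: "lam > 0" and small: "r < lam * infdist u0 (Sf g)"
  shows "\<exists>v c. g v = ereal c \<and> 0 < c \<and> (\<forall>u. ereal (c - lam * norm (u - v)) \<le> g u)"
proof -
  \<comment> \<open>Ekeland for the positive part of g on its effective domain\<close>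
  define Dom where "Dom = {u. g u < \<infinity>}"
  define \<psi> where "\<psi> = (\<lambda>u. max (real_of_ereal (g u)) 0)"
  have "closed {u \<in> Dom. \<psi> u \<le> T}" for T
  proof (cases "T < 0")
    case False
    then have "u \<in> Dom \<and> \<psi> u \<le> T \<longleftrightarrow> g u \<le> ereal T" for u
      by (cases "g u") (auto simp: Dom_def \<psi>_def)
    then have "{u \<in> Dom. \<psi> u \<le> T} = {u. g u \<le> ereal T}" by blast
    then show ?thesis using closed by simp
  qed (auto simp: \<psi>_def)
  moreover have "u0 \<in> Dom" "\<psi> u0 = r" using gu0 by (simp_all add: Dom_def \<psi>_def)
  ultimately obtain v where "v \<in> Dom" and descent: "\<psi> v + lam * dist v u0 \<le> r"
    and slope: "\<And>u. u \<in> Dom \<Longrightarrow> \<psi> v \<le> \<psi> u + lam * dist u v"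
    using ekeland_variational_principle[of Dom \<psi> u0 lam] lam by (auto simp: \<psi>_def)
  have "lam * dist v u0 < lam * infdist u0 (Sf g)"
    using descent small by (smt (verit) \<psi>_def max.cobounded2)
  then have "dist v u0 < infdist u0 (Sf g)" using lam by simp
  then have dv: "0 < infdist v (Sf g)"
    using infdist_triangle[of u0 "Sf g" v] by (simp add: dist_commute)
  have pos: "0 < g w" if "norm (w - v) < infdist v (Sf g)" for w
  proof (rule ccontr)
    assume "\<not> 0 < g w"
    then have "w \<in> Sf g" by (simp add: Sf_def not_less)
    then show False using infdist_le[of w "Sf g" v] that by (simp add: dist_norm norm_minus_commute)
  qed
  obtain c where gv: "g v = ereal c" using \<open>v \<in> Dom\<close> pos[of v] dv by (cases "g v") (auto simp: Dom_def)
  have "0 < c" "\<psi> v = c" using pos[of v] dv gv by (simp_all add: \<psi>_def)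
  have "ereal (c - lam * norm (u - v)) \<le> g u" if "norm (u - v) < infdist v (Sf g)" for u
  proof (cases "g u")
    case (real b)
    then have "\<psi> u = b" "u \<in> Dom" using pos[OF that] by (simp_all add: \<psi>_def Dom_def)
    then show ?thesis using slope[of u] \<open>\<psi> v = c\<close> real by (simp add: dist_norm)
  qed (use pos[OF that] in auto)
  then have "\<forall>u. ereal (c - lam * norm (u - v)) \<le> g u"
    using convex_fun_local_slope_imp_global[OF conv gv dv] by blast
  with gv \<open>0 < c\<close> show ?thesis by blast
qed

section \<open>Error bounds of perturbed functions\<close>

lemma edist_nonneg: "0 \<le> edist x S"
  by (simp add: edist_def infdist_nonneg)

lemma subdiff_bd_nonneg: "0 \<le> subdiff_bd f"
  unfolding subdiff_bd_def by (rule INF_greatest) (rule edist_nonneg)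

lemma Er_nonneg: "0 \<le> Er g"
  unfolding Er_def by (rule INF_greatest) (auto intro!: zero_le_divide_ereal simp: edist_def infdist_nonneg)

lemma Er_fam_nonneg: "0 \<le> Er_fam F"
  unfolding Er_fam_def by (rule INF_greatest) (rule Er_nonneg)

lemma eps_thr_antimono:
  assumes "\<And>\<epsilon>. \<epsilon> > 0 \<Longrightarrow> P \<epsilon> \<subseteq> Q \<epsilon>"
  shows "eps_thr Q \<le> eps_thr P"
proof -
  have "Er_fam (Q \<epsilon>) = 0" if "\<epsilon> > 0" "Er_fam (P \<epsilon>) = 0" for \<epsilon>
    using that INF_superset_mono[OF assms[OF that(1)] order_refl, of Er] Er_fam_nonneg[of "Q \<epsilon>"]
    unfolding Er_fam_def by simp
  then show ?thesis unfolding eps_thr_def by (intro Inf_superset_mono) auto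
qed

lemma convex_on_blinfun_shift: "convex_on UNIV (\<lambda>u. blinfun_apply xs (u - x))"
  by (intro convex_onI) (simp_all add: blinfun.bilinear_simps algebra_simps)

lemma blinfun_shift_lipschitz_at:
  assumes "norm xs \<le> \<xi>"
  shows "\<bar>blinfun_apply xs (u - x) - blinfun_apply xs (x - x)\<bar> \<le> \<xi> * norm (u - x)"
  using norm_blinfun[of xs "u - x"] mult_right_mono[OF assms norm_ge_zero[of "u - x"]] by simp

lemma Ptb_wl_subset_Ptb_w: "Ptb_wl f \<epsilon> \<subseteq> Ptb_w f \<epsilon>"
proof
  fix g assume "g \<in> Ptb_wl f \<epsilon>"
  then obtain x xs where x: "x \<in> Sf_eq f" "norm xs \<le> \<epsilon>"
    and g: "g = (\<lambda>u. f u + ereal (blinfun_apply xs (u - x)))"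
    unfolding Ptb_wl_def by blast
  have "x \<in> Sf g" using x g by (simp add: Sf_def Sf_eq_def)
  moreover note convex_on_blinfun_shift[of xs x]
  moreover have "\<forall>u. \<bar>blinfun_apply xs (u - x) - blinfun_apply xs (x - x)\<bar> \<le> \<epsilon> * norm (u - x)"
    using blinfun_shift_lipschitz_at[OF x(2)] by blast
  ultimately show "g \<in> Ptb_w f \<epsilon>" unfolding Ptb_w_def using x(1) g by blast
qed

lemma Ptb_l_subset_Ptb: "Ptb_l f \<epsilon> \<subseteq> Ptb f \<epsilon>"
proof
  fix g assume "g \<in> Ptb_l f \<epsilon>"
  then obtain x \<xi> xs where x: "x \<in> Sf_eq f" "\<xi> \<ge> 0" "norm xs \<le> \<xi>"
    "ereal \<xi> + subdiff_bd f - tau f x \<xi> 0 \<le> ereal \<epsilon>"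
    and g: "g = (\<lambda>u. f u + ereal (blinfun_apply xs (u - x)))"
    unfolding Ptb_l_def by blast
  have "x \<in> Sf g" using x g by (simp add: Sf_def Sf_eq_def)
  moreover note convex_on_blinfun_shift[of xs x]
  moreover have "\<forall>u. \<bar>blinfun_apply xs (u - x) - blinfun_apply xs (x - x)\<bar> \<le> \<xi> * norm (u - x)"
    using blinfun_shift_lipschitz_at[OF x(3)] by blast
  ultimately show "g \<in> Ptb f \<epsilon>" unfolding Ptb_def using x g by fastforce
qed

lemma Er_tilt_le:
  fixes f :: "'a::real_normed_vector \<Rightarrow> ereal"
  assumes fx: "f x = 0" and y: "y \<in> subdiff f x" and yv: "y + v \<notin> subdiff f x"
  shows "Er (\<lambda>w. f w + ereal (blinfun_apply (v - y) (w - x))) \<le> ereal (2 * norm v)"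
proof -
  define g where "g = (\<lambda>w. f w + ereal (blinfun_apply (v - y) (w - x)))"
  have y_le: "ereal (blinfun_apply y (w - x)) \<le> f w" for w
    using y fx by (simp add: subdiff_def)
  obtain u where u: "f u < ereal (blinfun_apply (y + v) (u - x))"
    using yv fx by (auto simp: subdiff_def not_le)
  obtain b where fu: "f u = ereal b"
    using u y_le[of u] by (cases "f u") auto
  define A where "A = blinfun_apply v (u - x)"
  have b: "blinfun_apply y (u - x) \<le> b" "b < blinfun_apply y (u - x) + A"
    using u y_le[of u] fu by (simp_all add: A_def blinfun.add_left)
  have "A \<le> norm v * norm (u - x)" using norm_blinfun[of v "u - x"] by (simp add: A_def)
  moreover have "0 < A" using b by linarith
  ultimately have A: "0 < A" "0 < norm v"
    using zero_less_norm_iff[of v] by fastforce+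
  have gu: "g u = ereal (b - blinfun_apply y (u - x) + A)"
    using fu by (simp add: g_def A_def blinfun.diff_left)
  \<comment> \<open>on the sublevel set v(w - x) \<le> 0, so it stays at distance A / norm v from u\<close>
  have far: "A / norm v \<le> dist u w" if "w \<in> Sf g" for w
  proof -
    have gw: "f w + ereal (blinfun_apply (v - y) (w - x)) \<le> 0"
      using that by (simp add: Sf_def g_def)
    obtain c where "f w = ereal c" using gw y_le[of w] by (cases "f w") auto
    then have "blinfun_apply v (w - x) \<le> 0"
      using gw y_le[of w] by (simp add: blinfun.diff_left)
    then have "A \<le> blinfun_apply v (u - w)" by (simp add: A_def blinfun.diff_right)
    also have "\<dots> \<le> norm v * dist u w" using norm_blinfun[of v "u - w"] by (simp add: dist_norm)
    finally show ?thesis using A(2) by (simp add: divide_le_eq mult.commute)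
  qed
  have "x \<in> Sf g" by (simp add: Sf_def g_def fx)
  then have ne: "Sf g \<noteq> {}" by blast
  have D: "A / norm v \<le> infdist u (Sf g)"
    unfolding infdist_notempty[OF ne] using ne far by (intro cINF_greatest) auto
  moreover have "0 < A / norm v" using A by simp
  ultimately have Dpos: "0 < infdist u (Sf g)" by linarith
  have "Er g \<le> g u / edist u (Sf g)"
    unfolding Er_def using gu b A by (intro INF_lower) simp
  also have "\<dots> = ereal ((b - blinfun_apply y (u - x) + A) / infdist u (Sf g))"
    using ne Dpos by (simp add: edist_def gu)
  also have "\<dots> \<le> ereal (2 * A / (A / norm v))"
    using b A D unfolding ereal_less_eq(3) by (intro frac_le) auto
  also have "\<dots> = ereal (2 * norm v)" using A by simp
  finally show ?thesis by (simp add: g_def)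
qed

lemma Er_Ptb_wl_arbitrarily_small:
  fixes f :: "'a::real_normed_vector \<Rightarrow> ereal"
  assumes \<epsilon>: "subdiff_bd f < ereal \<epsilon>" and \<eta>: "\<eta> > 0"
  shows "\<exists>g\<in>Ptb_wl f \<epsilon>. Er g \<le> ereal \<eta>"
proof -
  obtain x where x: "x \<in> Sf_eq f" and near: "edist 0 (frontier (subdiff f x)) < ereal \<epsilon>"
    using \<epsilon> unfolding subdiff_bd_def by (auto simp: INF_less_iff)
  define F where "F = frontier (subdiff f x)"
  have ne: "F \<noteq> {}" and "infdist 0 F < \<epsilon>"
    using near by (auto simp: edist_def F_def split: if_splits)
  then have "(INF a\<in>F. dist 0 a) < \<epsilon>" by (simp add: infdist_notempty[OF ne])
  then obtain y where "y \<in> F" and "dist 0 y < \<epsilon>"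
    using cINF_less_iff[OF ne bdd_below_image_dist] by blast
  then have y: "y \<in> subdiff f x" "y \<notin> interior (subdiff f x)" "norm y < \<epsilon>"
    using subdiff_closed[of f x] by (auto simp: F_def frontier_def)
  define r where "r = min (\<eta> / 2) (\<epsilon> - norm y)"
  have "r > 0" using \<eta> y(3) by (simp add: r_def)
  then obtain z where "dist y z < r" "z \<notin> subdiff f x"
    using y(2) unfolding mem_interior by (metis subsetI mem_ball)
  define v where "v = z - y"
  have v: "norm v < r" "y + v \<notin> subdiff f x"
    using \<open>dist y z < r\<close> \<open>z \<notin> subdiff f x\<close> by (simp_all add: v_def dist_norm norm_minus_commute)
  have "norm (v - y) \<le> \<epsilon>"
    using norm_triangle_ineq4[of v y] v(1) by (simp add: r_def)
  then have "(\<lambda>w. f w + ereal (blinfun_apply (v - y) (w - x))) \<in> Ptb_wl f \<epsilon>"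
    using x unfolding Ptb_wl_def by blast
  moreover have "Er (\<lambda>w. f w + ereal (blinfun_apply (v - y) (w - x))) \<le> ereal (2 * norm v)"
    using x y(1) v(2) by (intro Er_tilt_le) (simp_all add: Sf_eq_def)
  moreover have "2 * norm v \<le> \<eta>" using v(1) by (simp add: r_def)
  ultimately show ?thesis by (meson ereal_less_eq(3) order_trans)
qed

lemma eps_thr_Ptb_wl_le_subdiff_bd: "eps_thr (Ptb_wl f) \<le> subdiff_bd f"
proof (rule dense_ge)
  fix t assume t: "subdiff_bd f < t"
  show "eps_thr (Ptb_wl f) \<le> t"
  proof (cases t)
    case (real \<epsilon>)
    have "Er_fam (Ptb_wl f \<epsilon>) \<le> ereal \<eta>" if "\<eta> > 0" for \<eta>
      using Er_Ptb_wl_arbitrarily_small[of f \<epsilon> \<eta>] t real that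
      unfolding Er_fam_def by (auto intro: INF_lower2)
    then have "Er_fam (Ptb_wl f \<epsilon>) = 0"
      using Er_fam_nonneg[of "Ptb_wl f \<epsilon>"] by (metis antisym ereal_le_epsilon2 add_0)
    moreover have "0 < \<epsilon>"
    proof -
      have "ereal 0 < ereal \<epsilon>"
        using t real subdiff_bd_nonneg[of f] by (metis order_le_less_trans zero_ereal_def)
      then show ?thesis by simp
    qed
    ultimately show ?thesis unfolding eps_thr_def real by (intro Inf_lower) blast
  qed (use t in auto)
qed

lemma tau_nonneg: "0 \<le> tau f x \<xi> \<delta>"
  unfolding tau_def by (simp only: split: if_split) (intro conjI impI INF_greatest edist_nonneg)

lemma edist_frontier_subdiff_le_of_subgradient:
  fixes f :: "'a::real_normed_vector \<Rightarrow> ereal" and p :: "'a \<Rightarrow> real"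
  assumes fx: "f x = 0" and int: "0 \<in> interior (subdiff f x)" and p: "\<xi>-lipschitz_on UNIV p"
    and Sg: "Sf (\<lambda>u. f u + ereal (p u)) \<noteq> {}" and pos: "0 < f v + ereal (p v)"
    and xs: "xs \<in> subdiff f v" "norm xs \<le> K" and \<xi>K: "\<xi> \<le> K"
  shows "edist 0 (frontier (subdiff f x)) \<le> ereal K"
proof (rule ccontr)
  assume "\<not> ?thesis"
  then obtain \<rho> where "K < \<rho>" and \<rho>: "ereal \<rho> < edist 0 (frontier (subdiff f x))"
    using ereal_dense2 by (metis less_ereal.simps(1) not_le)
  have p_lip: "\<bar>p a - p b\<bar> \<le> \<xi> * norm (a - b)" for a b
    using lipschitz_onD[OF p] by (simp add: dist_real_def dist_norm)
  have grow: "ereal (\<rho> * norm (w - x)) \<le> f w" for w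
    using subdiff_interior_growth[OF fx int _ \<rho>] lipschitz_on_nonneg[OF p] \<xi>K \<open>K < \<rho>\<close> by simp
  show False
  proof (cases "v = x")
    case True
    \<comment> \<open>then p x > 0, while the growth of f beats the Lipschitz decrease of p\<close>
    obtain w where "f w + ereal (p w) \<le> 0" using Sg by (auto simp: Sf_def)
    moreover have "0 < \<rho> * norm (w - x) + p w"
      using pos True fx p_lip[of x w] mult_right_mono[of \<xi> \<rho> "norm (w - x)"] \<xi>K \<open>K < \<rho>\<close>
      by (simp add: norm_minus_commute)
    ultimately show False using grow[of w] by (cases "f w") auto
  next
    case False
    obtain c where fv: "f v = ereal c" using xs(1) by (cases "f v") (auto simp: subdiff_def)
    have "ereal (blinfun_apply xs (x - v)) \<le> f x - f v"
      using xs(1) unfolding subdiff_def by blast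
    then have "c \<le> blinfun_apply xs (v - x)"
      using fx fv by (simp add: blinfun.diff_right)
    also have "\<dots> \<le> K * norm (v - x)"
      using norm_blinfun[of xs "v - x"] mult_right_mono[OF xs(2) norm_ge_zero[of "v - x"]] by simp
    finally have "\<rho> * norm (v - x) \<le> K * norm (v - x)" using grow[of v] fv by simp
    then show False using False \<open>K < \<rho>\<close> by simp
  qed
qed

lemma tau_le_of_subgradient:
  fixes f :: "'a::real_normed_vector \<Rightarrow> ereal" and p :: "'a \<Rightarrow> real"
  assumes fx: "f x = 0" and p: "\<xi>-lipschitz_on UNIV p"
    and Sg: "Sf (\<lambda>u. f u + ereal (p u)) \<noteq> {}" and pos: "0 < f v + ereal (p v)"
    and xs: "xs \<in> subdiff f v" "norm xs \<le> K" and \<xi>K: "\<xi> \<le> K"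
  shows "tau f x \<xi> \<bar>p x\<bar> \<le> ereal K"
proof (cases "0 \<in> interior (subdiff f x)")
  case False
  have near: "edist 0 (subdiff f v) \<le> ereal K"
    using infdist_le[OF xs(1), of 0] xs(1,2) by (auto simp: edist_def)
  have "p v - p x \<le> \<xi> * norm (v - x)"
    using lipschitz_onD[OF p, of v x] by (simp add: dist_real_def dist_norm)
  moreover obtain c where "f v = ereal c" using xs(1) by (cases "f v") (auto simp: subdiff_def)
  ultimately have "ereal (- \<xi> * norm (v - x) - \<bar>p x\<bar>) \<le> f v"
    using pos by simp
  then show ?thesis using False near unfolding tau_def by (auto intro: INF_lower2)
next
  case True
  then show ?thesis
    using edist_frontier_subdiff_le_of_subgradient[OF fx True p Sg pos xs \<xi>K] by (simp add: tau_def)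
qed

lemma Ptb_slope_ge:
  fixes f :: "'a::banach \<Rightarrow> ereal"
  assumes f: "f \<in> Gamma0" and g: "g \<in> Ptb f \<epsilon>" and bd: "subdiff_bd f = ereal b"
    and gu0: "g u0 = ereal r" "0 < r" and lam: "0 < lam" and small: "r < lam * infdist u0 (Sf g)"
  shows "b - \<epsilon> \<le> lam"
proof -
  obtain p x \<xi> where Sg: "Sf g \<noteq> {}" and p: "convex_on UNIV p" and g_eq: "g = (\<lambda>u. f u + ereal (p u))"
    and x: "x \<in> Sf_eq f" and "\<xi> \<ge> 0" and cond: "ereal \<xi> + subdiff_bd f - tau f x \<xi> \<bar>p x\<bar> \<le> ereal \<epsilon>"
    and "\<And>u. \<bar>p u - p x\<bar> \<le> \<xi> * norm (u - x)"
    using g unfolding Ptb_def by blast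
  then have p_lip: "\<xi>-lipschitz_on UNIV p" by (intro convex_on_lipschitz_on) auto
  have f_conv: "convex_fun f" and f_lsc: "lsc_fun f" using f by (simp_all add: Gamma0_def)
  have "\<exists>v c. g v = ereal c \<and> 0 < c \<and> (\<forall>u. ereal (c - lam * norm (u - v)) \<le> g u)"
  proof (rule ekeland_convex_slope_point[OF _ _ gu0 lam small])
    show "closed {u. g u \<le> ereal T}" for T
      unfolding g_eq using f_lsc lipschitz_on_continuous_on[OF p_lip]
      by (intro closed_sublevel_add_continuous) (simp_all add: lsc_fun_def)
    show "convex_fun g" unfolding g_eq by (rule convex_fun_add[OF f_conv p])
  qed
  then obtain v c where gv: "g v = ereal c" "0 < c" and slope: "\<And>u. ereal (c - lam * norm (u - v)) \<le> g u"
    by blast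
  have fv: "f v = ereal (c - p v)" using gv(1) unfolding g_eq by (cases "f v") auto
  have minorant: "ereal (c - p v - (lam + \<xi>) * norm (u - v)) \<le> f u" for u
  proof -
    have "p u - p v \<le> \<xi> * norm (u - v)"
      using lipschitz_onD[OF p_lip, of u v] by (simp add: dist_real_def dist_norm)
    then show ?thesis using slope[of u] unfolding g_eq by (cases "f u") (auto simp: algebra_simps)
  qed
  then obtain xs where xs: "xs \<in> subdiff f v" "norm xs \<le> lam + \<xi>"
    using subdiff_nonempty_of_lipschitz_minorant[OF f_conv fv _ minorant] lam \<open>\<xi> \<ge> 0\<close> by auto
  have "tau f x \<xi> \<bar>p x\<bar> \<le> ereal (lam + \<xi>)"
    using x Sg gv xs lam unfolding g_eq
    by (intro tau_le_of_subgradient[OF _ p_lip]) (auto simp: Sf_eq_def)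
  then show ?thesis using cond bd tau_nonneg[of f x \<xi> "\<bar>p x\<bar>"] by (cases "tau f x \<xi> \<bar>p x\<bar>") auto
qed

lemma Er_Ptb_ge:
  fixes f :: "'a::banach \<Rightarrow> ereal"
  assumes f: "f \<in> Gamma0" and g: "g \<in> Ptb f \<epsilon>" and bd: "subdiff_bd f = ereal b"
  shows "ereal (b - \<epsilon>) \<le> Er g"
  unfolding Er_def
proof (rule INF_greatest, clarify)
  fix u0 assume pos: "0 < g u0"
  have "Sf g \<noteq> {}" using g by (simp add: Ptb_def)
  then have edist: "edist u0 (Sf g) = ereal (infdist u0 (Sf g))" by (simp add: edist_def)
  show "ereal (b - \<epsilon>) \<le> g u0 / edist u0 (Sf g)"
  proof (cases "g u0")
    case (real r)
    have "b - \<epsilon> \<le> r / infdist u0 (Sf g)" if "0 < infdist u0 (Sf g)"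
    proof (rule ccontr)
      assume gap: "\<not> b - \<epsilon> \<le> r / infdist u0 (Sf g)"
      \<comment> \<open>any slope strictly between the error-bound quotient and b - \<epsilon> is contradictory\<close>
      define q where "q = r / infdist u0 (Sf g)"
      define lam where "lam = (q + (b - \<epsilon>)) / 2"
      have "0 < r" using pos real by simp
      then have q: "0 < q" "q < b - \<epsilon>" using that gap by (simp_all add: q_def)
      have lam: "0 < lam" "q < lam" "lam < b - \<epsilon>" using q by (simp_all add: lam_def)
      then have "r < lam * infdist u0 (Sf g)" using that by (simp add: q_def divide_less_eq)
      from Ptb_slope_ge[OF f g bd real \<open>0 < r\<close> lam(1) this] show False using lam(3) by linarith
    qed
    then show ?thesis using pos real infdist_nonneg[of u0 "Sf g"]
      by (cases "infdist u0 (Sf g) = 0") (auto simp: edist)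
  qed (use pos infdist_nonneg[of u0 "Sf g"] in \<open>auto simp: edist\<close>)
qed

lemma subdiff_bd_le_eps_thr_Ptb:
  fixes f :: "'a::banach \<Rightarrow> ereal"
  assumes f: "f \<in> Gamma0"
  shows "subdiff_bd f \<le> eps_thr (Ptb f)"
  unfolding eps_thr_def
proof (rule Inf_greatest, clarify)
  fix \<epsilon> :: real assume "0 < \<epsilon>" and Er0: "Er_fam (Ptb f \<epsilon>) = 0"
  show "subdiff_bd f \<le> ereal \<epsilon>"
  proof (rule ccontr)
    assume "\<not> ?thesis"
    then have less: "ereal \<epsilon> < subdiff_bd f" by simp
    show False
    proof (cases "subdiff_bd f")
      case (real b)
      then have "ereal (b - \<epsilon>) \<le> Er_fam (Ptb f \<epsilon>)"
        unfolding Er_fam_def by (intro INF_greatest Er_Ptb_ge[OF f])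
      then show False using Er0 less real by simp
    next
      case PInf
      \<comment> \<open>no perturbation qualifies, so the infimum over the empty family is \<infinity>\<close>
      then have "Ptb f \<epsilon> = {}" by (auto simp: Ptb_def)
      then show False using Er0 by (simp add: Er_fam_def top_ereal_def)
    qed (use subdiff_bd_nonneg[of f] in simp)
  qed
qed

theorem mainTheorem8:
  fixes f :: "'a::banach \<Rightarrow> ereal"
  assumes "f \<in> Gamma0"
    and "Sf f \<noteq> {}"
  shows "eps_thr (Ptb_w f) \<le> eps_thr (Ptb_wl f) \<and> eps_thr (Ptb_wl f) \<le> subdiff_bd f \<and>
         subdiff_bd f \<le> eps_thr (Ptb f) \<and> eps_thr (Ptb f) \<le> eps_thr (Ptb_l f)"
proof (intro conjI)
  show "eps_thr (Ptb_w f) \<le> eps_thr (Ptb_wl f)"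
    by (rule eps_thr_antimono[OF Ptb_wl_subset_Ptb_w])
  show "eps_thr (Ptb_wl f) \<le> subdiff_bd f"
    by (rule eps_thr_Ptb_wl_le_subdiff_bd)
  show "subdiff_bd f \<le> eps_thr (Ptb f)"
    by (rule subdiff_bd_le_eps_thr_Ptb[OF assms(1)])
  show "eps_thr (Ptb f) \<le> eps_thr (Ptb_l f)"
    by (rule eps_thr_antimono[OF Ptb_l_subset_Ptb])
qed

end
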